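(* Let $B$ be an aperiodic Bratteli diagram of finite rank $d$. Then there exists $j\in\{1,\dots,d\}$ such that $\mu$-almost every ordering $\omega\in\mathcal O_B$ has exactly $j$ maximal paths and exactly $j$ minimal paths; in particular $\mu(\mathcal O_B(j))=1$ and $|X_{\max}(\omega)|=|X_{\min}(\omega)|$ for $\mu$-almost all $\omega$.
   Context: A Bratteli diagram $B$ has levels $V_n$ ($V_0=\{v_0\}$, all finite) and finite edge sets $E_n$ from $V_{n-1}$ to $V_n$ with source/range maps $s,r$, $s^{-1}(v)\ne\emptyset$, $r^{-1}(v)\ne\emptyset$ for $v\ne v_0$. $X_B$ is the space of infinite paths from $v_0$. $B$ is aperiodic if every tail-equivalence class of $X_B$ is infinite. Rank $d$: $\sup_n|V_n|<\infty$ and $d$ is the least integer with $|V_n|=d$ infinitely often. An ordering is a linear order on each $r^{-1}(v)$, $v\ne v_0$; $\mathcal O_B=\prod_{v\in V^*\setminus V_0}P_v$, $P_v$ the set of linear orders of $r^{-1}(v)$. $\mu=\prod_v\mu_v$ is the product measure where $\mu_v$ is uniform on $P_v$ (each order has mass $1/|r^{-1}(v)|!$). $X_{\max}(\omega),X_{\min}(\omega)$: infinite paths all of whose edges are maximal (minimal). $\mathcal O_B(j)$: orderings with exactly $j$ maximal paths. *)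

theory Defs
  imports "HOL-Probability.Probability"
begin

text \<open>A Bratteli diagram is encoded concretely:
  level n has vertex set {..<vn n}; for n \<ge> 1 the edge set E_n is {..<en n}
  (edges from level n-1 to level n), with source map src n and range map rng n.
  Values of en 0, src 0, rng 0 are irrelevant.\<close>

definition is_bratteli ::
  "(nat \<Rightarrow> nat) \<Rightarrow> (nat \<Rightarrow> nat) \<Rightarrow> (nat \<Rightarrow> nat \<Rightarrow> nat) \<Rightarrow> (nat \<Rightarrow> nat \<Rightarrow> nat) \<Rightarrow> bool" where
  "is_bratteli vn en src rng \<longleftrightarrow>
     vn 0 = 1 \<and> (\<forall>n. 1 \<le> vn n) \<and>
     (\<forall>n\<ge>1. \<forall>e<en n. src n e < vn (n - 1) \<and> rng n e < vn n) \<and>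
     (\<forall>n\<ge>1. \<forall>v<vn n. (\<exists>e<en n. rng n e = v) \<and> (\<exists>e<en (Suc n). src (Suc n) e = v))"

definition in_edges :: "(nat \<Rightarrow> nat) \<Rightarrow> (nat \<Rightarrow> nat \<Rightarrow> nat) \<Rightarrow> nat \<Rightarrow> nat \<Rightarrow> nat set" where
  "in_edges en rng n v = {e. e < en n \<and> rng n e = v}"

text \<open>Infinite paths from v_0: x n is the edge used in E_n (n \<ge> 1); x 0 normalised to 0.\<close>
definition path_space :: "(nat \<Rightarrow> nat) \<Rightarrow> (nat \<Rightarrow> nat \<Rightarrow> nat) \<Rightarrow> (nat \<Rightarrow> nat \<Rightarrow> nat) \<Rightarrow> (nat \<Rightarrow> nat) set" where
  "path_space en src rng =
     {x. x 0 = 0 \<and> (\<forall>n\<ge>1. x n < en n) \<and> src 1 (x 1) = 0 \<and>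
         (\<forall>n\<ge>1. rng n (x n) = src (Suc n) (x (Suc n)))}"

definition tail_equiv :: "(nat \<Rightarrow> nat) \<Rightarrow> (nat \<Rightarrow> nat) \<Rightarrow> bool" where
  "tail_equiv x y \<longleftrightarrow> (\<exists>N. \<forall>n\<ge>N. x n = y n)"

definition aperiodic :: "(nat \<Rightarrow> nat) \<Rightarrow> (nat \<Rightarrow> nat \<Rightarrow> nat) \<Rightarrow> (nat \<Rightarrow> nat \<Rightarrow> nat) \<Rightarrow> bool" where
  "aperiodic en src rng \<longleftrightarrow>
     (\<forall>x\<in>path_space en src rng. infinite {y \<in> path_space en src rng. tail_equiv x y})"

definition has_rank :: "(nat \<Rightarrow> nat) \<Rightarrow> nat \<Rightarrow> bool" where
  "has_rank vn d \<longleftrightarrow> (\<exists>M. \<forall>n. vn n \<le> M) \<and> d = (LEAST k. infinite {n. vn n = k})"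

text \<open>A linear order on r^{-1}(v) is encoded by its rank function, a bijection
  r^{-1}(v) \<rightarrow> {0..<|r^{-1}(v)|} (0 = minimal edge), extended by 0 outside.\<close>
definition orders_at :: "(nat \<Rightarrow> nat) \<Rightarrow> (nat \<Rightarrow> nat \<Rightarrow> nat) \<Rightarrow> nat \<Rightarrow> nat \<Rightarrow> (nat \<Rightarrow> nat) set" where
  "orders_at en rng n v =
     {f. bij_betw f (in_edges en rng n v) {..<card (in_edges en rng n v)} \<and>
         (\<forall>e. e \<notin> in_edges en rng n v \<longrightarrow> f e = 0)}"

definition vertices :: "(nat \<Rightarrow> nat) \<Rightarrow> (nat \<times> nat) set" where
  "vertices vn = {(n, v). 1 \<le> n \<and> v < vn n}"

definition ord_measure ::
  "(nat \<Rightarrow> nat) \<Rightarrow> (nat \<Rightarrow> nat) \<Rightarrow> (nat \<Rightarrow> nat \<Rightarrow> nat) \<Rightarrow> ((nat \<times> nat) \<Rightarrow> (nat \<Rightarrow> nat)) measure" where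
  "ord_measure vn en rng =
     PiM (vertices vn) (\<lambda>(n, v). measure_pmf (pmf_of_set (orders_at en rng n v)))"

definition Xmax ::
  "(nat \<Rightarrow> nat) \<Rightarrow> (nat \<Rightarrow> nat \<Rightarrow> nat) \<Rightarrow> (nat \<Rightarrow> nat \<Rightarrow> nat) \<Rightarrow> ((nat \<times> nat) \<Rightarrow> (nat \<Rightarrow> nat)) \<Rightarrow> (nat \<Rightarrow> nat) set" where
  "Xmax en src rng \<omega> =
     {x \<in> path_space en src rng. \<forall>n\<ge>1.
        \<omega> (n, rng n (x n)) (x n) = card (in_edges en rng n (rng n (x n))) - 1}"

definition Xmin ::
  "(nat \<Rightarrow> nat) \<Rightarrow> (nat \<Rightarrow> nat \<Rightarrow> nat) \<Rightarrow> (nat \<Rightarrow> nat \<Rightarrow> nat) \<Rightarrow> ((nat \<times> nat) \<Rightarrow> (nat \<Rightarrow> nat)) \<Rightarrow> (nat \<Rightarrow> nat) set" where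
  "Xmin en src rng \<omega> =
     {x \<in> path_space en src rng. \<forall>n\<ge>1. \<omega> (n, rng n (x n)) (x n) = 0}"

end

theory Submission
  imports Defs
begin

(*
  Fix an ordering \<omega> in which every factor is a genuine linear order (a "proper" ordering;
  almost every ordering is proper).  Every vertex v at level n has a maximal incoming edge,
  whose source is a vertex at level n - 1; iterating this gives a descent map from deeper
  levels down to level n.  A vertex at level n is "persistent" if it is reached by descent
  from every deeper level.  A maximal finite path is determined by its endpoint, and by a
  compactness (Koenig) argument the truncations at level n of the maximal infinite paths are
  exactly the maximal finite paths ending at persistent vertices.  Hence |X_max(\<omega>)| is the
  eventual value of the nondecreasing bounded sequence (number of persistent vertices at
  level n), a number in {1..d} because infinitely many levels have d vertices.

  Probabilistically, the number of persistent vertices at levels \<ge> N depends only on the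
  orders at levels > N, so {|X_max| = j} is (up to a null set) a tail event for the
  independent levels and has probability 0 or 1 by Kolmogorov's 0-1 law; as these events for
  j \<in> {1..d} cover almost everything, one of them is almost sure.  Finally, reversing every
  order is a measure preserving map of O_B that exchanges maximal and minimal paths, so
  |X_min| = j almost surely as well.
*)

(* Truncation of a sequence after position n; finite paths of length n are stored this way. *)
definition trunc :: "nat \<Rightarrow> (nat \<Rightarrow> nat) \<Rightarrow> nat \<Rightarrow> nat" where
  "trunc n x = (\<lambda>k. if k \<le> n then x k else 0)"

lemma trunc_trunc: "trunc n (trunc m x) = trunc (min n m) x"
  by (auto simp: trunc_def)

lemma trunc_eventually_inj_on:
  assumes "finite F"
  shows "\<exists>N. \<forall>n\<ge>N. inj_on (trunc n) F"
proof -
  define D where "D = {d \<in> F \<times> F. fst d \<noteq> snd d}"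
  have "\<forall>d\<in>D. \<exists>k. fst d k \<noteq> snd d k" by (auto simp: D_def fun_eq_iff)
  then obtain pos where pos: "\<And>d. d \<in> D \<Longrightarrow> fst d (pos d) \<noteq> snd d (pos d)" by metis
  have "finite D" using assms by (auto simp: D_def)
  define N where "N = Max (insert 0 (pos ` D))"
  have "inj_on (trunc n) F" if "N \<le> n" for n
  proof (rule inj_onI, rule ccontr)
    fix x y assume xy: "x \<in> F" "y \<in> F" "trunc n x = trunc n y" "x \<noteq> y"
    then have d: "(x, y) \<in> D" by (simp add: D_def)
    then have "pos (x, y) \<le> n" using \<open>finite D\<close> that unfolding N_def by fastforce
    then have "x (pos (x, y)) = y (pos (x, y))"
      using xy(3) unfolding trunc_def by meson
    then show False using pos[OF d] by simp
  qed
  then show ?thesis by blast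
qed

lemma card_trunc_image_mono:
  assumes "finite (trunc m ` X)" "n \<le> m"
  shows "card (trunc n ` X) \<le> card (trunc m ` X)"
proof -
  have "trunc n ` X = trunc n ` trunc m ` X"
    using assms(2) by (simp add: image_image trunc_trunc min_absorb1)
  then show ?thesis using card_image_le[OF assms(1)] by simp
qed

lemma finite_card_eq_iff_trunc:
  assumes fin: "\<And>n. finite (trunc n ` X)"
  shows "(finite X \<and> card X = j) \<longleftrightarrow> (\<exists>n0. \<forall>n\<ge>n0. card (trunc n ` X) = j)"
proof
  assume X: "finite X \<and> card X = j"
  then obtain N where "\<forall>n\<ge>N. inj_on (trunc n) X" using trunc_eventually_inj_on by blast
  then have "\<forall>n\<ge>N. card (trunc n ` X) = j" using X by (simp add: card_image)
  then show "\<exists>n0. \<forall>n\<ge>n0. card (trunc n ` X) = j" by blast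
next
  assume "\<exists>n0. \<forall>n\<ge>n0. card (trunc n ` X) = j"
  then obtain n0 where n0: "\<And>n. n0 \<le> n \<Longrightarrow> card (trunc n ` X) = j" by blast
  have "finite X"
  proof (rule ccontr)
    assume "infinite X"
    then obtain F where F: "finite F" "card F = Suc j" "F \<subseteq> X"
      using infinite_arbitrarily_large by blast
    obtain N where N: "\<forall>n\<ge>N. inj_on (trunc n) F" using trunc_eventually_inj_on[OF F(1)] by blast
    define m where "m = max n0 N"
    have "Suc j = card (trunc m ` F)" using N F(2) by (simp add: m_def card_image)
    also have "\<dots> \<le> card (trunc m ` X)" using F(3) fin by (intro card_mono image_mono)
    also have "\<dots> = j" using n0 by (simp add: m_def)
    finally show False by simp
  qed
  then obtain N where "\<forall>n\<ge>N. inj_on (trunc n) X" using trunc_eventually_inj_on by blast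
  then show "finite X \<and> card X = j"
    using \<open>finite X\<close> n0[of "max n0 N"] by (simp add: card_image)
qed

lemma trunc_coherent_limit:
  assumes coh: "\<And>k. trunc (n + k) (ps (Suc k)) = ps k"
    and supp: "\<And>k. trunc (n + k) (ps k) = ps k"
  shows "trunc (n + k) (\<lambda>i. ps i i) = ps k"
proof -
  have below: "trunc (n + i) (ps k) = ps i" if "i \<le> k" for i k
    using that
  proof (induction k rule: dec_induct)
    case base then show ?case by (rule supp)
  next
    case (step k)
    have "trunc (n + i) (ps (Suc k)) = trunc (n + i) (trunc (n + k) (ps (Suc k)))"
      using step by (simp add: trunc_trunc min_def)
    then show ?case using step coh by simp
  qed
  have "ps i i = ps k i" if "i \<le> n + k" for i
  proof (cases "i \<le> k")
    case True
    have "ps i i = trunc (n + i) (ps k) i" using below[OF True] by simp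
    then show ?thesis by (simp add: trunc_def)
  next
    case False
    then have "ps k i = trunc (n + k) (ps i) i" using below[of k i] by simp
    then show ?thesis using that by (simp add: trunc_def)
  qed
  moreover have "ps k i = 0" if "\<not> i \<le> n + k" for i
  proof -
    have "ps k i = trunc (n + k) (ps k) i" using supp[of k] by simp
    then show ?thesis using that by (simp add: trunc_def)
  qed
  ultimately show ?thesis by (auto simp: trunc_def)
qed

lemma pred_card_Collect:
  assumes "finite A" and "\<And>a. a \<in> A \<Longrightarrow> Measurable.pred M (\<lambda>x. P x a)"
  shows "Measurable.pred M (\<lambda>x. card {a \<in> A. P x a} = c)"
proof -
  have eq: "card {a \<in> A. P x a} = c \<longleftrightarrow>
      (\<exists>S\<in>{S. S \<subseteq> A \<and> card S = c}. \<forall>a\<in>A. a \<in> S \<longleftrightarrow> P x a)" for x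
  proof
    assume "card {a \<in> A. P x a} = c"
    then show "\<exists>S\<in>{S. S \<subseteq> A \<and> card S = c}. \<forall>a\<in>A. a \<in> S \<longleftrightarrow> P x a"
      by (intro bexI[of _ "{a \<in> A. P x a}"]) auto
  next
    assume "\<exists>S\<in>{S. S \<subseteq> A \<and> card S = c}. \<forall>a\<in>A. a \<in> S \<longleftrightarrow> P x a"
    then obtain S where "S \<subseteq> A" "card S = c" "\<forall>a\<in>A. a \<in> S \<longleftrightarrow> P x a" by blast
    then have "{a \<in> A. P x a} = S" by blast
    with \<open>card S = c\<close> show "card {a \<in> A. P x a} = c" by simp
  qed
  have "finite {S. S \<subseteq> A \<and> card S = c}" using assms(1) by simp
  then show ?thesis unfolding eq using assms by measurable
qed

lemma measurable_coordinate_undefined: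
  assumes "\<And>\<omega>. \<omega> \<in> space M \<Longrightarrow> \<omega> i = undefined"
  shows "(\<lambda>\<omega>. \<omega> i) \<in> M \<rightarrow>\<^sub>M count_space UNIV"
proof -
  have "(\<lambda>\<omega>. \<omega> i) \<in> M \<rightarrow>\<^sub>M count_space UNIV \<longleftrightarrow> (\<lambda>_. undefined) \<in> M \<rightarrow>\<^sub>M count_space UNIV"
    using measurable_cong[of M "\<lambda>\<omega>. \<omega> i" "\<lambda>_. undefined"] assms by simp
  then show ?thesis by simp
qed

lemma infinite_level_size_of_rank:
  assumes "has_rank vn d"
  shows "infinite {n. vn n = d}"
proof -
  obtain M where M: "\<And>n. vn n \<le> M" and d: "d = (LEAST k. infinite {n. vn n = k})"
    using assms unfolding has_rank_def by blast
  have "\<exists>k. infinite {n. vn n = k}"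
  proof (rule ccontr)
    assume "\<not> (\<exists>k. infinite {n. vn n = k})"
    then have "finite (\<Union>k\<in>{..M}. {n. vn n = k})" by auto
    moreover have "(\<Union>k\<in>{..M}. {n. vn n = k}) = UNIV" using M by auto
    ultimately show False by simp
  qed
  then show ?thesis unfolding d by (rule LeastI_ex)
qed


locale bratteli =
  fixes vn en :: "nat \<Rightarrow> nat" and src rng :: "nat \<Rightarrow> nat \<Rightarrow> nat"
  assumes diagram: "is_bratteli vn en src rng"
begin

lemma vn_0: "vn 0 = 1"
  using diagram by (simp add: is_bratteli_def)

lemma vn_pos: "1 \<le> vn n"
  using diagram by (simp add: is_bratteli_def)

lemma edge_ends:
  assumes "1 \<le> n" "e < en n"
  shows "src n e < vn (n - 1)" "rng n e < vn n"
proof -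
  have "\<forall>n\<ge>1. \<forall>e<en n. src n e < vn (n - 1) \<and> rng n e < vn n"
    using diagram unfolding is_bratteli_def by (elim conjE)
  then show "src n e < vn (n - 1)" "rng n e < vn n" using assms by simp_all
qed

abbreviation incoming :: "nat \<Rightarrow> nat \<Rightarrow> nat set" where
  "incoming n v \<equiv> in_edges en rng n v"

abbreviation max_paths :: "(nat \<times> nat \<Rightarrow> nat \<Rightarrow> nat) \<Rightarrow> (nat \<Rightarrow> nat) set" where
  "max_paths \<omega> \<equiv> Xmax en src rng \<omega>"

lemma finite_incoming: "finite (incoming n v)"
  by (simp add: in_edges_def)

lemma incoming_nonempty: "1 \<le> n \<Longrightarrow> v < vn n \<Longrightarrow> incoming n v \<noteq> {}"
  using diagram by (auto simp: is_bratteli_def in_edges_def)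

definition top_rank :: "nat \<Rightarrow> nat \<Rightarrow> nat" where
  "top_rank n v = card (incoming n v) - 1"

definition proper :: "(nat \<times> nat \<Rightarrow> nat \<Rightarrow> nat) \<Rightarrow> bool" where
  "proper \<omega> \<longleftrightarrow> (\<forall>n\<ge>1. \<forall>v<vn n. \<omega> (n, v) \<in> orders_at en rng n v)"

lemma orders_at_less: "f \<in> orders_at en rng n v \<Longrightarrow> e \<in> incoming n v \<Longrightarrow> f e < card (incoming n v)"
  unfolding orders_at_def bij_betw_def by auto


subsection \<open>Maximal edges and the descent map\<close>

definition max_edge :: "(nat \<times> nat \<Rightarrow> nat \<Rightarrow> nat) \<Rightarrow> nat \<Rightarrow> nat \<Rightarrow> nat" where
  "max_edge \<omega> n v = (SOME e. e \<in> incoming n v \<and> \<omega> (n, v) e = top_rank n v)"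

definition down :: "(nat \<times> nat \<Rightarrow> nat \<Rightarrow> nat) \<Rightarrow> nat \<Rightarrow> nat \<Rightarrow> nat" where
  "down \<omega> n v = src n (max_edge \<omega> n v)"

lemma max_edge:
  assumes "proper \<omega>" "1 \<le> n" "v < vn n"
  shows "max_edge \<omega> n v \<in> incoming n v" "\<omega> (n, v) (max_edge \<omega> n v) = top_rank n v"
proof -
  have "bij_betw (\<omega> (n, v)) (incoming n v) {..<card (incoming n v)}"
    using assms by (simp add: proper_def orders_at_def)
  moreover have "top_rank n v \<in> {..<card (incoming n v)}"
    using incoming_nonempty[OF assms(2,3)] finite_incoming
    by (simp add: top_rank_def card_gt_0_iff)
  ultimately have "\<exists>e. e \<in> incoming n v \<and> \<omega> (n, v) e = top_rank n v"
    unfolding bij_betw_def by (metis imageE)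
  then show "max_edge \<omega> n v \<in> incoming n v" "\<omega> (n, v) (max_edge \<omega> n v) = top_rank n v"
    unfolding max_edge_def by (metis (mono_tags, lifting) someI_ex)+
qed

lemma max_edge_unique:
  assumes "proper \<omega>" "1 \<le> n" "v < vn n" "e \<in> incoming n v" "\<omega> (n, v) e = top_rank n v"
  shows "e = max_edge \<omega> n v"
proof -
  have "inj_on (\<omega> (n, v)) (incoming n v)"
    using assms by (simp add: proper_def orders_at_def bij_betw_def)
  with max_edge[OF assms(1-3)] assms(4,5) show ?thesis by (metis inj_onD)
qed

lemma max_edge_props:
  assumes "proper \<omega>" "1 \<le> n" "v < vn n"
  shows "max_edge \<omega> n v < en n" "rng n (max_edge \<omega> n v) = v" "down \<omega> n v < vn (n - 1)"
  using max_edge(1)[OF assms] edge_ends[OF assms(2)] by (auto simp: in_edges_def down_def)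

(* descend \<omega> n j w: follow maximal edges from the vertex w at level n + j down to level n. *)
fun descend :: "(nat \<times> nat \<Rightarrow> nat \<Rightarrow> nat) \<Rightarrow> nat \<Rightarrow> nat \<Rightarrow> nat \<Rightarrow> nat" where
  "descend \<omega> n 0 w = w"
| "descend \<omega> n (Suc j) w = descend \<omega> n j (down \<omega> (n + j + 1) w)"

lemma descend_less: "proper \<omega> \<Longrightarrow> w < vn (n + j) \<Longrightarrow> descend \<omega> n j w < vn n"
proof (induction j arbitrary: w)
  case (Suc j)
  then have "down \<omega> (n + j + 1) w < vn (n + j)"
    using max_edge_props(3)[OF Suc.prems(1), of "n + j + 1" w] by simp
  then show ?case using Suc by simp
qed simp

lemma descend_Suc_top: "descend \<omega> n (Suc j) w = down \<omega> (n + 1) (descend \<omega> (n + 1) j w)"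
proof (induction j arbitrary: w)
  case (Suc j)
  have "descend \<omega> n (Suc (Suc j)) w = descend \<omega> n (Suc j) (down \<omega> (n + Suc j + 1) w)" by simp
  also have "\<dots> = down \<omega> (n + 1) (descend \<omega> (n + 1) j (down \<omega> (n + Suc j + 1) w))" by (rule Suc.IH)
  also have "\<dots> = down \<omega> (n + 1) (descend \<omega> (n + 1) (Suc j) w)" by (simp add: algebra_simps)
  finally show ?case .
qed simp

definition persistent :: "(nat \<times> nat \<Rightarrow> nat \<Rightarrow> nat) \<Rightarrow> nat \<Rightarrow> nat set" where
  "persistent \<omega> n = {v \<in> {..<vn n}. \<forall>j. \<exists>w<vn (n + j). descend \<omega> n j w = v}"

lemma card_persistent_le: "card (persistent \<omega> n) \<le> vn n"
  using card_mono[of "{..<vn n}" "persistent \<omega> n"] by (auto simp: persistent_def)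

lemma persistent_0: assumes "proper \<omega>" shows "persistent \<omega> 0 = {0}"
proof -
  have pos: "0 < vn j" for j using vn_pos[of j] by simp
  have "descend \<omega> 0 j 0 = 0" for j
    using descend_less[OF assms, of 0 0 j] pos vn_0 by simp
  then show ?thesis using pos vn_0 unfolding persistent_def
    by (auto intro!: exI[of _ 0] simp: Suc_le_eq)
qed


subsection \<open>Maximal finite paths\<close>

definition fin_path :: "nat \<Rightarrow> (nat \<Rightarrow> nat) \<Rightarrow> bool" where
  "fin_path n p \<longleftrightarrow> p 0 = 0 \<and> (\<forall>k. 1 \<le> k \<and> k \<le> n \<longrightarrow> p k < en k) \<and>
     (1 \<le> n \<longrightarrow> src 1 (p 1) = 0) \<and>
     (\<forall>k. 1 \<le> k \<and> k < n \<longrightarrow> rng k (p k) = src (Suc k) (p (Suc k))) \<and> (\<forall>k>n. p k = 0)"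

definition is_max_edge :: "(nat \<times> nat \<Rightarrow> nat \<Rightarrow> nat) \<Rightarrow> nat \<Rightarrow> nat \<Rightarrow> bool" where
  "is_max_edge \<omega> n e \<longleftrightarrow> e < en n \<and> \<omega> (n, rng n e) e = top_rank n (rng n e)"

definition max_fin_path :: "(nat \<times> nat \<Rightarrow> nat \<Rightarrow> nat) \<Rightarrow> nat \<Rightarrow> (nat \<Rightarrow> nat) \<Rightarrow> bool" where
  "max_fin_path \<omega> n p \<longleftrightarrow> fin_path n p \<and> (\<forall>k. 1 \<le> k \<and> k \<le> n \<longrightarrow> is_max_edge \<omega> k (p k))"

definition extendable :: "(nat \<times> nat \<Rightarrow> nat \<Rightarrow> nat) \<Rightarrow> nat \<Rightarrow> (nat \<Rightarrow> nat) set" where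
  "extendable \<omega> n = {p. max_fin_path \<omega> n p \<and> (\<forall>m\<ge>n. \<exists>q. max_fin_path \<omega> m q \<and> trunc n q = p)}"

definition endpoint :: "nat \<Rightarrow> (nat \<Rightarrow> nat) \<Rightarrow> nat" where
  "endpoint n p = (if n = 0 then 0 else rng n (p n))"

lemma fin_path_trunc: "fin_path m q \<Longrightarrow> n \<le> m \<Longrightarrow> fin_path n (trunc n q)"
  by (auto simp: fin_path_def trunc_def)

lemma max_fin_path_trunc: "max_fin_path \<omega> m q \<Longrightarrow> n \<le> m \<Longrightarrow> max_fin_path \<omega> n (trunc n q)"
  by (auto simp: max_fin_path_def fin_path_trunc) (auto simp: trunc_def)

lemma trunc_fin_path: "fin_path n p \<Longrightarrow> trunc n p = p"
  by (auto simp: fin_path_def trunc_def fun_eq_iff)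

lemma endpoint_trunc: "endpoint n (trunc n q) = endpoint n q"
  by (simp add: endpoint_def trunc_def)

lemma finite_fin_paths: "finite {p. fin_path n p}"
proof -
  define B where "B = Suc (Max (en ` {..n}))"
  have "{p. fin_path n p} \<subseteq> (\<lambda>f k. if k \<le> n then f k else 0) ` ({..n} \<rightarrow>\<^sub>E {..<B})"
  proof
    fix p assume p: "p \<in> {p. fin_path n p}"
    have "p k < B" if "k \<le> n" for k
    proof (cases "k = 0")
      case True then show ?thesis using p by (simp add: fin_path_def B_def)
    next
      case False
      then have "p k < en k" using p that by (simp add: fin_path_def)
      moreover have "en k \<le> Max (en ` {..n})" using that by simp
      ultimately show ?thesis unfolding B_def by simp
    qed
    then have "restrict p {..n} \<in> {..n} \<rightarrow>\<^sub>E {..<B}" by auto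
    moreover have "p = (\<lambda>k. if k \<le> n then restrict p {..n} k else 0)"
      using p by (auto simp: fin_path_def fun_eq_iff)
    ultimately show "p \<in> (\<lambda>f k. if k \<le> n then f k else 0) ` ({..n} \<rightarrow>\<^sub>E {..<B})"
      by blast
  qed
  then show ?thesis by (rule finite_subset) (auto intro!: finite_PiE)
qed

lemma finite_extendable: "finite (extendable \<omega> n)"
  by (rule finite_subset[OF _ finite_fin_paths[of n]]) (auto simp: extendable_def max_fin_path_def)

lemma max_paths_iff_trunc: "x \<in> max_paths \<omega> \<longleftrightarrow> (\<forall>n. max_fin_path \<omega> n (trunc n x))"
proof
  assume "x \<in> max_paths \<omega>"
  then show "\<forall>n. max_fin_path \<omega> n (trunc n x)"
    unfolding Xmax_def path_space_def max_fin_path_def fin_path_def is_max_edge_def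
      top_rank_def trunc_def in_edges_def
    by auto
next
  assume all: "\<forall>n. max_fin_path \<omega> n (trunc n x)"
  have path: "fin_path n (trunc n x)" and max: "\<forall>k. 1 \<le> k \<and> k \<le> n \<longrightarrow> is_max_edge \<omega> k (x k)" for n
    using all[rule_format, of n] by (auto simp: max_fin_path_def trunc_def)
  have "x \<in> path_space en src rng"
    unfolding path_space_def
  proof (intro CollectI conjI allI impI)
    show "x 0 = 0" using path[of 0] by (simp add: fin_path_def trunc_def)
    show "src 1 (x 1) = 0" using path[of 1] by (simp add: fin_path_def trunc_def)
    fix k :: nat assume k: "1 \<le> k"
    show "x k < en k" using path[of k] k by (simp add: fin_path_def trunc_def)
    show "rng k (x k) = src (Suc k) (x (Suc k))"
      using path[of "Suc k"] k by (simp add: fin_path_def trunc_def)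
  qed
  then show "x \<in> max_paths \<omega>"
    using max by (auto simp: Xmax_def is_max_edge_def top_rank_def)
qed

lemma extendable_step:
  assumes "p \<in> extendable \<omega> n"
  shows "\<exists>p'\<in>extendable \<omega> (Suc n). trunc n p' = p"
proof -
  have "\<forall>m. \<exists>q. max_fin_path \<omega> (m + Suc n) q \<and> trunc n q = p"
    using assms by (auto simp: extendable_def)
  then obtain q where q: "\<And>m. max_fin_path \<omega> (m + Suc n) (q m) \<and> trunc n (q m) = p" by metis
  define h where "h m = trunc (Suc n) (q m)" for m
  have "fin_path (Suc n) (h m)" for m
    using fin_path_trunc[of "m + Suc n" "q m" "Suc n"] q[of m] by (simp add: h_def max_fin_path_def)
  then have "h ` UNIV \<subseteq> {p. fin_path (Suc n) p}" by auto
  then have "finite (h ` UNIV)" using finite_fin_paths finite_subset by blast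
  then obtain a0 where a0: "infinite {a. h a = h a0}"
    using pigeonhole_infinite[of "UNIV :: nat set" h] by auto
  have "h a0 \<in> extendable \<omega> (Suc n)"
    unfolding extendable_def
  proof (intro CollectI conjI allI impI)
    show "max_fin_path \<omega> (Suc n) (h a0)" unfolding h_def using q[of a0] by (auto intro: max_fin_path_trunc)
    fix m assume m: "Suc n \<le> m"
    obtain a where a: "a \<in> {a. h a = h a0}" "m \<le> a"
      using a0 infinite_nat_iff_unbounded_le by blast
    have "max_fin_path \<omega> m (trunc m (q a))" using q[of a] a(2) by (auto intro: max_fin_path_trunc)
    moreover have "trunc (Suc n) (trunc m (q a)) = h a0"
      using a m by (simp add: trunc_trunc h_def min_def)
    ultimately show "\<exists>q. max_fin_path \<omega> m q \<and> trunc (Suc n) q = h a0" by blast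
  qed
  moreover have "trunc n (h a0) = p" using q[of a0] by (simp add: h_def trunc_trunc min_def)
  ultimately show ?thesis by blast
qed

lemma extendable_lifts:
  assumes "p \<in> extendable \<omega> n"
  shows "\<exists>x\<in>max_paths \<omega>. trunc n x = p"
proof -
  define ps where "ps = rec_nat p (\<lambda>k pk. SOME p'. p' \<in> extendable \<omega> (Suc (n + k)) \<and> trunc (n + k) p' = pk)"
  have ps_Suc: "ps (Suc k) = (SOME p'. p' \<in> extendable \<omega> (Suc (n + k)) \<and> trunc (n + k) p' = ps k)"
    for k by (simp add: ps_def)
  have step: "ps (Suc k) \<in> extendable \<omega> (Suc (n + k)) \<and> trunc (n + k) (ps (Suc k)) = ps k"
    if "ps k \<in> extendable \<omega> (n + k)" for k
    using someI_ex[OF extendable_step[OF that, unfolded Bex_def]] by (simp add: ps_Suc)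
  have ext: "ps k \<in> extendable \<omega> (n + k)" for k
  proof (induction k)
    case 0 then show ?case using assms by (simp add: ps_def)
  next
    case (Suc k) then show ?case using step by simp
  qed
  have max_ps: "max_fin_path \<omega> (n + k) (ps k)" for k using ext by (simp add: extendable_def)
  have coh: "trunc (n + k) (ps (Suc k)) = ps k" for k
    using step[OF ext[of k]] by blast
  have supp: "trunc (n + k) (ps k) = ps k" for k
    using max_ps[of k] by (simp add: max_fin_path_def trunc_fin_path)
  have trunc_x: "trunc (n + k) (\<lambda>i. ps i i) = ps k" for k
    by (rule trunc_coherent_limit[OF coh supp])
  have "max_fin_path \<omega> m (trunc m (\<lambda>i. ps i i))" for m
  proof -
    have "trunc m (\<lambda>i. ps i i) = trunc m (ps m)"
      using trunc_x[of m] trunc_trunc[of m "n + m" "\<lambda>i. ps i i"] by (simp add: min_def)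
    then show ?thesis using max_fin_path_trunc[OF max_ps[of m]] by simp
  qed
  then have "(\<lambda>i. ps i i) \<in> max_paths \<omega>" by (simp add: max_paths_iff_trunc)
  moreover have "trunc n (\<lambda>i. ps i i) = p" using trunc_x[of 0] by (simp add: ps_def)
  ultimately show ?thesis by blast
qed

lemma extendable_eq: "extendable \<omega> n = trunc n ` max_paths \<omega>"
proof
  show "extendable \<omega> n \<subseteq> trunc n ` max_paths \<omega>" using extendable_lifts by blast
  show "trunc n ` max_paths \<omega> \<subseteq> extendable \<omega> n"
  proof
    fix p assume "p \<in> trunc n ` max_paths \<omega>"
    then obtain x where x: "x \<in> max_paths \<omega>" "p = trunc n x" by blast
    then have max: "max_fin_path \<omega> m (trunc m x)" for m by (simp add: max_paths_iff_trunc)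
    have "trunc n (trunc m x) = p" if "n \<le> m" for m
      using that x(2) by (simp add: trunc_trunc min_def)
    then show "p \<in> extendable \<omega> n"
      using max x(2) unfolding extendable_def by blast
  qed
qed

lemma max_fin_path_edge:
  assumes "proper \<omega>" "max_fin_path \<omega> m p" "1 \<le> k" "k \<le> m"
  shows "endpoint k p < vn k" "p k = max_edge \<omega> k (endpoint k p)"
    "down \<omega> k (endpoint k p) = endpoint (k - 1) p"
proof -
  have path: "fin_path m p" and max: "is_max_edge \<omega> k (p k)"
    using assms by (auto simp: max_fin_path_def)
  have end_k: "endpoint k p = rng k (p k)" using assms(3) by (simp add: endpoint_def)
  have "p k < en k" using max by (simp add: is_max_edge_def)
  then show less: "endpoint k p < vn k" using edge_ends(2)[OF assms(3)] end_k by simp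
  have "p k \<in> incoming k (endpoint k p)" using \<open>p k < en k\<close> end_k by (simp add: in_edges_def)
  then show edge: "p k = max_edge \<omega> k (endpoint k p)"
    using max_edge_unique[OF assms(1,3) less] max end_k by (simp add: is_max_edge_def)
  have "src k (p k) = endpoint (k - 1) p"
  proof (cases "k = 1")
    case True then show ?thesis using path assms(4) by (simp add: fin_path_def endpoint_def)
  next
    case False
    then have "1 \<le> k - 1 \<and> k - 1 < m" using assms(3,4) by linarith
    then have "rng (k - 1) (p (k - 1)) = src (Suc (k - 1)) (p (Suc (k - 1)))"
      using path unfolding fin_path_def by blast
    then show ?thesis using False assms(3) by (simp add: endpoint_def)
  qed
  then show "down \<omega> k (endpoint k p) = endpoint (k - 1) p" using edge by (simp add: down_def)
qed

lemma max_fin_path_endpoint_less: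
  "proper \<omega> \<Longrightarrow> max_fin_path \<omega> n p \<Longrightarrow> endpoint n p < vn n"
  using max_fin_path_edge(1)[of \<omega> n p n] vn_pos[of 0] by (cases "n = 0") (auto simp: endpoint_def)

lemma max_fin_path_descend:
  assumes "proper \<omega>" "max_fin_path \<omega> m p" "n + j \<le> m"
  shows "descend \<omega> n j (endpoint (n + j) p) = endpoint n p"
  using assms(3)
proof (induction j)
  case (Suc j)
  then show ?case using max_fin_path_edge(3)[OF assms(1,2), of "n + j + 1"] by simp
qed simp

lemma max_fin_path_unique:
  assumes "proper \<omega>" "max_fin_path \<omega> n p" "max_fin_path \<omega> n q" "endpoint n p = endpoint n q"
  shows "p = q"
proof
  fix k
  show "p k = q k"
  proof (cases "1 \<le> k \<and> k \<le> n")
    case True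
    have "endpoint k p = endpoint k q"
      using max_fin_path_descend[OF assms(1,2), of k "n - k"]
        max_fin_path_descend[OF assms(1,3), of k "n - k"] True assms(4)
      by simp
    then show ?thesis using max_fin_path_edge(2)[OF assms(1,2)] max_fin_path_edge(2)[OF assms(1,3)] True
      by metis
  next
    case False
    then show ?thesis using assms(2,3) by (cases "k = 0") (auto simp: max_fin_path_def fin_path_def)
  qed
qed

definition max_path_to :: "(nat \<times> nat \<Rightarrow> nat \<Rightarrow> nat) \<Rightarrow> nat \<Rightarrow> nat \<Rightarrow> nat \<Rightarrow> nat" where
  "max_path_to \<omega> n v = (\<lambda>k. if 1 \<le> k \<and> k \<le> n then max_edge \<omega> k (descend \<omega> k (n - k) v) else 0)"

lemma max_path_to:
  assumes "proper \<omega>" "v < vn n"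
  shows "max_fin_path \<omega> n (max_path_to \<omega> n v)" "endpoint n (max_path_to \<omega> n v) = v"
proof -
  define u where "u k = descend \<omega> k (n - k) v" for k
  have u_less: "k \<le> n \<Longrightarrow> u k < vn k" for k
    using descend_less[OF assms(1), of v k "n - k"] assms(2) by (simp add: u_def)
  have u_down: "down \<omega> k (u k) = u (k - 1)" if k: "1 \<le> k" "k \<le> n" for k
  proof -
    have "n - (k - 1) = Suc (n - k)" using k by simp
    then have "u (k - 1) = descend \<omega> (k - 1) (Suc (n - k)) v" by (simp add: u_def)
    also have "\<dots> = down \<omega> (k - 1 + 1) (descend \<omega> (k - 1 + 1) (n - k) v)" by (rule descend_Suc_top)
    also have "\<dots> = down \<omega> k (u k)" using k by (simp add: u_def)
    finally show ?thesis by simp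
  qed
  let ?p = "max_path_to \<omega> n v"
  have p_k: "1 \<le> k \<Longrightarrow> k \<le> n \<Longrightarrow> ?p k = max_edge \<omega> k (u k)" for k
    by (simp add: max_path_to_def u_def)
  have edge: "?p k < en k" "rng k (?p k) = u k" "\<omega> (k, u k) (?p k) = top_rank k (u k)"
    if "1 \<le> k" "k \<le> n" for k
    using max_edge_props[OF assms(1) that(1) u_less] max_edge(2)[OF assms(1) that(1) u_less] p_k that
    by simp_all
  have src_p: "src k (?p k) = u (k - 1)" if "1 \<le> k" "k \<le> n" for k
    using u_down[OF that] p_k[OF that] by (simp add: down_def)
  have "fin_path n ?p"
    unfolding fin_path_def
  proof (intro conjI allI impI)
    show "?p 0 = 0" by (simp add: max_path_to_def)
    show "1 \<le> n \<Longrightarrow> src 1 (?p 1) = 0" using src_p[of 1] u_less[of 0] vn_0 by simp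
    fix k
    show "1 \<le> k \<and> k \<le> n \<Longrightarrow> ?p k < en k" using edge by simp
    show "1 \<le> k \<and> k < n \<Longrightarrow> rng k (?p k) = src (Suc k) (?p (Suc k))"
      using edge(2)[of k] src_p[of "Suc k"] by simp
    show "n < k \<Longrightarrow> ?p k = 0" by (simp add: max_path_to_def)
  qed
  then show "max_fin_path \<omega> n ?p"
    using edge by (simp add: max_fin_path_def is_max_edge_def)
  show "endpoint n ?p = v"
    using edge(2)[of n] assms(2) vn_0 by (cases "n = 0") (simp_all add: endpoint_def u_def)
qed

lemma trunc_max_path_to:
  assumes "proper \<omega>" "w < vn m" "n \<le> m"
  shows "trunc n (max_path_to \<omega> m w) = max_path_to \<omega> n (descend \<omega> n (m - n) w)"
proof (rule max_fin_path_unique[OF assms(1)])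
  have less: "descend \<omega> n (m - n) w < vn n" using descend_less[OF assms(1), of w n "m - n"] assms by simp
  show "max_fin_path \<omega> n (trunc n (max_path_to \<omega> m w))"
    using max_fin_path_trunc[OF max_path_to(1)[OF assms(1,2)] assms(3)] .
  show "max_fin_path \<omega> n (max_path_to \<omega> n (descend \<omega> n (m - n) w))"
    using max_path_to(1)[OF assms(1) less] .
  show "endpoint n (trunc n (max_path_to \<omega> m w)) = endpoint n (max_path_to \<omega> n (descend \<omega> n (m - n) w))"
    using max_fin_path_descend[OF assms(1) max_path_to(1)[OF assms(1,2)], of n "m - n"] assms
      max_path_to(2)[OF assms(1,2)] max_path_to(2)[OF assms(1) less]
    by (simp add: endpoint_trunc)
qed

(* An extendable path ends at a persistent vertex: its extensions witness the descents. *)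
lemma endpoint_extendable:
  assumes "proper \<omega>" "p \<in> extendable \<omega> n"
  shows "endpoint n p \<in> persistent \<omega> n"
proof -
  have "endpoint n p < vn n"
    using assms max_fin_path_endpoint_less[OF assms(1)] by (simp add: extendable_def)
  moreover have "\<exists>w<vn (n + j). descend \<omega> n j w = endpoint n p" for j
  proof -
    have "\<exists>q. max_fin_path \<omega> (n + j) q \<and> trunc n q = p"
      using assms(2) le_add1[of n j] unfolding extendable_def by blast
    then obtain q where q: "max_fin_path \<omega> (n + j) q" "trunc n q = p" by blast
    have "descend \<omega> n j (endpoint (n + j) q) = endpoint n p"
      using max_fin_path_descend[OF assms(1) q(1)] q(2) endpoint_trunc[of n q] by simp
    then show ?thesis using max_fin_path_endpoint_less[OF assms(1) q(1)] by blast
  qed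
  ultimately show ?thesis by (simp add: persistent_def)
qed

lemma max_path_to_extendable:
  assumes "proper \<omega>" "v \<in> persistent \<omega> n"
  shows "max_path_to \<omega> n v \<in> extendable \<omega> n"
  unfolding extendable_def
proof (intro CollectI conjI allI impI)
  have less: "v < vn n" using assms(2) by (simp add: persistent_def)
  then show "max_fin_path \<omega> n (max_path_to \<omega> n v)" using max_path_to(1)[OF assms(1)] by blast
  fix m assume m: "n \<le> m"
  obtain w where w: "w < vn (n + (m - n))" "descend \<omega> n (m - n) w = v"
    using assms(2) by (auto simp: persistent_def)
  then have "w < vn m" using m by simp
  then show "\<exists>q. max_fin_path \<omega> m q \<and> trunc n q = max_path_to \<omega> n v"
    using max_path_to(1)[OF assms(1)] trunc_max_path_to[OF assms(1) _ m] w(2) by blast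
qed

lemma extendable_persistent:
  assumes "proper \<omega>"
  shows "bij_betw (endpoint n) (extendable \<omega> n) (persistent \<omega> n)"
  unfolding bij_betw_def
proof (intro conjI equalityI subsetI)
  show "inj_on (endpoint n) (extendable \<omega> n)"
  proof (rule inj_onI)
    fix p q assume "p \<in> extendable \<omega> n" "q \<in> extendable \<omega> n" "endpoint n p = endpoint n q"
    then show "p = q" using max_fin_path_unique[OF assms, of n p q] by (simp add: extendable_def)
  qed
  show "v \<in> persistent \<omega> n" if "v \<in> endpoint n ` extendable \<omega> n" for v
    using that endpoint_extendable[OF assms] by blast
  show "v \<in> endpoint n ` extendable \<omega> n" if "v \<in> persistent \<omega> n" for v
  proof -
    have "v = endpoint n (max_path_to \<omega> n v)"
      using that max_path_to(2)[OF assms] by (simp add: persistent_def)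
    then show ?thesis using max_path_to_extendable[OF assms that] by blast
  qed
qed

lemma card_trunc_max_paths:
  assumes "proper \<omega>"
  shows "card (trunc n ` max_paths \<omega>) = card (persistent \<omega> n)"
  using bij_betw_same_card[OF extendable_persistent[OF assms]] by (simp add: extendable_eq)

lemma finite_trunc_max_paths: "finite (trunc n ` max_paths \<omega>)"
  using finite_extendable[of \<omega> n] by (simp add: extendable_eq)

lemma card_max_paths_iff_persistent:
  assumes "proper \<omega>"
  shows "(finite (max_paths \<omega>) \<and> card (max_paths \<omega>) = j) \<longleftrightarrow>
    (\<exists>n0. \<forall>n\<ge>n0. card (persistent \<omega> n) = j)"
  using finite_card_eq_iff_trunc[of "max_paths \<omega>", OF finite_trunc_max_paths]
  by (simp add: card_trunc_max_paths[OF assms])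

lemma persistent_eventually_const:
  assumes "proper \<omega>" "infinite {n. vn n = d}"
  shows "\<exists>j\<in>{1..d}. \<exists>n0. \<forall>n\<ge>n0. card (persistent \<omega> n) = j"
proof -
  let ?c = "\<lambda>n. card (trunc n ` max_paths \<omega>)"
  have mono: "?c n \<le> ?c m" if "n \<le> m" for n m
    using card_trunc_image_mono[OF finite_trunc_max_paths that] .
  have bounded: "?c n \<le> d" for n
  proof -
    obtain m where m: "m \<in> {n. vn n = d}" "n \<le> m"
      using assms(2) infinite_nat_iff_unbounded_le by blast
    then show ?thesis
      using mono[OF m(2)] card_persistent_le[of \<omega> m] card_trunc_max_paths[OF assms(1)] by simp
  qed
  have "range ?c \<subseteq> {..d}" using bounded by auto
  then have fin: "finite (range ?c)" by (rule finite_subset) simp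
  define c where "c = Max (range ?c)"
  have "c \<in> range ?c" using Max_in[OF fin] by (simp add: c_def)
  then obtain n0 where n0: "c = ?c n0" by blast
  have le: "?c n \<le> c" for n using fin by (simp add: c_def)
  have "\<forall>n\<ge>n0. card (persistent \<omega> n) = c"
  proof (intro allI impI)
    fix n assume "n0 \<le> n"
    then have "?c n = c" using mono[OF \<open>n0 \<le> n\<close>] le[of n] n0 by simp
    then show "card (persistent \<omega> n) = c" using card_trunc_max_paths[OF assms(1)] by simp
  qed
  moreover have "?c 0 = 1" using card_trunc_max_paths[OF assms(1)] persistent_0[OF assms(1)] by simp
  then have "c \<in> {1..d}" using le[of 0] bounded[of n0] n0 by simp
  ultimately show ?thesis by blast
qed


subsection \<open>The probability space of orderings\<close>

abbreviation \<mu> :: "(nat \<times> nat \<Rightarrow> nat \<Rightarrow> nat) measure" where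
  "\<mu> \<equiv> ord_measure vn en rng"

definition factor :: "nat \<times> nat \<Rightarrow> (nat \<Rightarrow> nat) measure" where
  "factor = (\<lambda>(n, v). measure_pmf (pmf_of_set (orders_at en rng n v)))"

lemma \<mu>_eq: "\<mu> = PiM (vertices vn) factor"
  by (simp add: ord_measure_def factor_def)

lemma factor_apply: "factor i = measure_pmf (pmf_of_set (orders_at en rng (fst i) (snd i)))"
  by (simp add: factor_def split_beta)

lemma prob_space_factor: "prob_space (factor i)"
  by (simp add: factor_apply measure_pmf.prob_space_axioms)

lemma sets_factor [simp]: "sets (factor i) = UNIV"
  by (simp add: factor_apply)

lemma space_factor [simp]: "space (factor i) = UNIV"
  by (simp add: factor_apply)

lemma measurable_factor_iff: "f \<in> M \<rightarrow>\<^sub>M factor i \<longleftrightarrow> f \<in> M \<rightarrow>\<^sub>M count_space UNIV"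
  using measurable_cong_sets[of M M "factor i" "count_space UNIV"] by simp

lemma prob_space_\<mu>: "prob_space \<mu>"
  unfolding \<mu>_eq by (rule prob_space_PiM) (rule prob_space_factor)

lemma space_\<mu>: "space \<mu> = PiE (vertices vn) (\<lambda>_. UNIV)"
  by (simp add: \<mu>_eq space_PiM)

lemma finite_orders_at: "finite (orders_at en rng n v)"
proof -
  let ?I = "incoming n v"
  have "orders_at en rng n v \<subseteq> (\<lambda>f e. if e \<in> ?I then f e else 0) ` (?I \<rightarrow>\<^sub>E {..<card ?I})"
  proof
    fix f assume f: "f \<in> orders_at en rng n v"
    then have "restrict f ?I \<in> ?I \<rightarrow>\<^sub>E {..<card ?I}"
      by (auto simp: orders_at_def bij_betw_def)
    moreover have "f = (\<lambda>e. if e \<in> ?I then restrict f ?I e else 0)"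
      using f by (auto simp: orders_at_def fun_eq_iff)
    ultimately show "f \<in> (\<lambda>f e. if e \<in> ?I then f e else 0) ` (?I \<rightarrow>\<^sub>E {..<card ?I})"
      by blast
  qed
  then show ?thesis by (rule finite_subset) (auto intro!: finite_PiE finite_incoming)
qed

lemma orders_at_nonempty: "orders_at en rng n v \<noteq> {}"
proof -
  obtain h where h: "bij_betw h (incoming n v) {0..<card (incoming n v)}"
    using ex_bij_betw_finite_nat[OF finite_incoming] by blast
  define f where "f e = (if e \<in> incoming n v then h e else 0)" for e
  have "bij_betw f (incoming n v) {..<card (incoming n v)}"
    using h by (subst bij_betw_cong[of _ f h]) (auto simp: f_def atLeast0LessThan)
  then have "f \<in> orders_at en rng n v" by (simp add: orders_at_def f_def)
  then show ?thesis by blast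
qed

lemma AE_proper: "AE \<omega> in \<mu>. proper \<omega>"
proof -
  have "AE \<omega> in \<mu>. \<forall>i\<in>vertices vn. \<omega> i \<in> orders_at en rng (fst i) (snd i)"
  proof (subst AE_ball_countable)
    show "countable (vertices vn)" by (rule countable_subset[of _ UNIV]) auto
    show "\<forall>i\<in>vertices vn. AE \<omega> in \<mu>. \<omega> i \<in> orders_at en rng (fst i) (snd i)"
    proof
      fix i assume i: "i \<in> vertices vn"
      have "AE f in factor i. f \<in> orders_at en rng (fst i) (snd i)"
        unfolding factor_apply AE_measure_pmf_iff
          set_pmf_of_set[OF orders_at_nonempty finite_orders_at] by blast
      then show "AE \<omega> in \<mu>. \<omega> i \<in> orders_at en rng (fst i) (snd i)"
        unfolding \<mu>_eq by (rule AE_PiM_component[OF prob_space_factor i])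
    qed
  qed
  then show ?thesis
    by eventually_elim (auto simp: proper_def vertices_def)
qed

lemma measurable_coordinate:
  assumes "i \<in> vertices vn"
  shows "(\<lambda>\<omega>. \<omega> i) \<in> \<mu> \<rightarrow>\<^sub>M count_space UNIV"
  using measurable_component_singleton[OF assms, of factor] by (simp add: \<mu>_eq measurable_factor_iff)

lemma pred_is_max_edge:
  assumes "1 \<le> k"
  shows "Measurable.pred \<mu> (\<lambda>\<omega>. is_max_edge \<omega> k e)"
  unfolding is_max_edge_def
proof (rule pred_intros_conj1')
  assume "e < en k"
  then have "(k, rng k e) \<in> vertices vn" using edge_ends(2)[OF assms] assms by (simp add: vertices_def)
  from measurable_compose[OF measurable_coordinate[OF this] measurable_count_space[of "\<lambda>f. f e" UNIV]]
  show "Measurable.pred \<mu> (\<lambda>\<omega>. \<omega> (k, rng k e) e = top_rank k (rng k e))"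
    by (rule pred_count_space_const1)
qed

lemma pred_max_fin_path: "Measurable.pred \<mu> (\<lambda>\<omega>. max_fin_path \<omega> n p)"
  unfolding max_fin_path_def
proof (intro pred_intros_conj1' pred_intros_countable(1) pred_intros_imp')
  fix k assume "1 \<le> k \<and> k \<le> n"
  then show "Measurable.pred \<mu> (\<lambda>\<omega>. is_max_edge \<omega> k (p k))" by (simp add: pred_is_max_edge)
qed

(* The number of extendable paths of length n only depends on countably many finite
   conditions on \<omega>, hence is measurable. *)
lemma pred_card_extendable: "Measurable.pred \<mu> (\<lambda>\<omega>. card (extendable \<omega> n) = c)"
proof -
  have "max_fin_path \<omega> k q \<Longrightarrow> fin_path k q" for \<omega> k q by (simp add: max_fin_path_def)
  then have extendable_alt: "extendable \<omega> n = {p \<in> {p. fin_path n p}. max_fin_path \<omega> n p \<and>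
      (\<forall>m. n \<le> m \<longrightarrow> (\<exists>q\<in>{q. fin_path m q}. max_fin_path \<omega> m q \<and> trunc n q = p))}" for \<omega>
    unfolding extendable_def by blast
  have extension: "Measurable.pred \<mu> (\<lambda>\<omega>. \<exists>q\<in>{q. fin_path m q}. max_fin_path \<omega> m q \<and> trunc n q = p)"
    for m p
    by (rule pred_intros_finite(4)[OF finite_fin_paths], rule pred_intros_conj2', rule pred_max_fin_path)
  have "Measurable.pred \<mu> (\<lambda>\<omega>. max_fin_path \<omega> n p \<and>
      (\<forall>m. n \<le> m \<longrightarrow> (\<exists>q\<in>{q. fin_path m q}. max_fin_path \<omega> m q \<and> trunc n q = p)))" for p
    by (rule pred_intros_logic(3)[OF pred_max_fin_path pred_intros_countable(1)[OF pred_intros_imp'[OF extension]]])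
  then show ?thesis unfolding extendable_alt by (intro pred_card_Collect finite_fin_paths)
qed

(* {|X_max| = j} is an event, via the finite-truncation characterisation. *)
lemma sets_card_max_paths:
  "{\<omega> \<in> space \<mu>. finite (max_paths \<omega>) \<and> card (max_paths \<omega>) = j} \<in> sets \<mu>"
proof -
  have pred: "Measurable.pred \<mu> (\<lambda>\<omega>. \<exists>n0. \<forall>n\<ge>n0. card (extendable \<omega> n) = j)"
    by (intro pred_intros_countable pred_intros_imp' pred_card_extendable)
  have count: "finite (max_paths \<omega>) \<and> card (max_paths \<omega>) = j \<longleftrightarrow>
      (\<exists>n0. \<forall>n\<ge>n0. card (extendable \<omega> n) = j)" for \<omega>
    unfolding extendable_eq by (rule finite_card_eq_iff_trunc[OF finite_trunc_max_paths])
  show ?thesis using pred unfolding Measurable.pred_def count .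
qed


subsection \<open>Persistence is a tail event\<close>

(* The vertices of level k + 1 and the events determined by the orders there. *)
definition level :: "nat \<Rightarrow> (nat \<times> nat) set" where
  "level k = {Suc k} \<times> {..<vn (Suc k)}"

definition level_events :: "nat \<Rightarrow> (nat \<times> nat \<Rightarrow> nat \<Rightarrow> nat) set set" where
  "level_events k = sigma_sets (space \<mu>)
     {(\<lambda>\<omega>. restrict \<omega> (level k)) -` A \<inter> space \<mu> | A. A \<in> sets (PiM (level k) factor)}"

(* The sigma-algebra of the orders at the levels > N. *)
definition beyond :: "nat \<Rightarrow> (nat \<times> nat \<Rightarrow> nat \<Rightarrow> nat) measure" where
  "beyond N = sigma (space \<mu>) (\<Union> (level_events ` {N..}))"

lemma level_events_subset: "level_events k \<subseteq> Pow (space \<mu>)"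
  unfolding level_events_def by (rule subsetI, drule sigma_sets_into_sp[rotated]) auto

lemma sigma_algebra_level_events: "sigma_algebra (space \<mu>) (level_events k)"
  unfolding level_events_def by (rule sigma_algebra_sigma_sets) auto

lemma sets_beyond: "sets (beyond N) = sigma_sets (space \<mu>) (\<Union> (level_events ` {N..}))"
  unfolding beyond_def using level_events_subset by (intro sets_measure_of) auto

lemma space_beyond: "space (beyond N) = space \<mu>"
  unfolding beyond_def using level_events_subset by (intro space_measure_of) auto

lemma measurable_coordinate_beyond:
  assumes "Suc N \<le> k"
  shows "(\<lambda>\<omega>. \<omega> (k, w)) \<in> beyond N \<rightarrow>\<^sub>M count_space UNIV"
proof (cases "w < vn k")
  case True
  define k' where "k' = k - 1"
  have k: "k = Suc k'" "N \<le> k'" using assms by (auto simp: k'_def)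
  have in_level: "(k, w) \<in> level k'" using True k by (simp add: level_def)
  show ?thesis unfolding measurable_def
  proof (intro CollectI conjI ballI)
    show "(\<lambda>\<omega>. \<omega> (k, w)) \<in> space (beyond N) \<rightarrow> space (count_space UNIV)" by simp
    fix B assume "B \<in> sets (count_space (UNIV :: (nat \<Rightarrow> nat) set))"
    define C where "C = {f \<in> space (PiM (level k') factor). f (k, w) \<in> B}"
    have C: "C \<in> sets (PiM (level k') factor)" unfolding C_def
      by (rule sets_Collect_single[OF in_level]) simp
    have "(\<lambda>\<omega>. \<omega> (k, w)) -` B \<inter> space (beyond N) = (\<lambda>\<omega>. restrict \<omega> (level k')) -` C \<inter> space \<mu>"
      unfolding space_beyond C_def using in_level by (auto simp: space_PiM)
    moreover have "(\<lambda>\<omega>. restrict \<omega> (level k')) -` C \<inter> space \<mu> \<in> \<Union> (level_events ` {N..})"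
      unfolding level_events_def using C k by (blast intro: sigma_sets.Basic)
    ultimately show "(\<lambda>\<omega>. \<omega> (k, w)) -` B \<inter> space (beyond N) \<in> sets (beyond N)"
      unfolding sets_beyond by (simp add: sigma_sets.Basic)
  qed
next
  case False
  then have "(k, w) \<notin> vertices vn" by (simp add: vertices_def)
  then show ?thesis
    by (intro measurable_coordinate_undefined) (auto simp: space_beyond space_\<mu> intro: PiE_arb)
qed

lemma measurable_descend_beyond:
  assumes "N \<le> m"
  shows "(\<lambda>\<omega>. descend \<omega> m j w) \<in> beyond N \<rightarrow>\<^sub>M count_space UNIV"
proof (induction j arbitrary: w)
  case (Suc j)
  have down: "(\<lambda>\<omega>. down \<omega> (m + j + 1) w) \<in> beyond N \<rightarrow>\<^sub>M count_space UNIV"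
  proof -
    have "(\<lambda>\<omega>. down \<omega> (m + j + 1) w) =
        (\<lambda>\<omega>. (\<lambda>f. src (m + j + 1) (SOME e. e \<in> incoming (m + j + 1) w \<and> f e = top_rank (m + j + 1) w))
          (\<omega> (m + j + 1, w)))"
      by (simp add: down_def max_edge_def)
    also have "\<dots> \<in> beyond N \<rightarrow>\<^sub>M count_space UNIV"
      using assms by (intro measurable_compose[OF measurable_coordinate_beyond measurable_count_space]) simp
    finally show ?thesis .
  qed
  have "(\<lambda>\<omega>. descend \<omega> m (Suc j) w) = (\<lambda>\<omega>. (\<lambda>i \<omega>. descend \<omega> m j i) (down \<omega> (m + j + 1) w) \<omega>)"
    by simp
  also have "\<dots> \<in> beyond N \<rightarrow>\<^sub>M count_space UNIV"
    by (rule measurable_compose_countable[OF Suc.IH down])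
  finally show ?case .
qed simp

lemma pred_card_persistent_beyond:
  assumes "N \<le> m"
  shows "Measurable.pred (beyond N) (\<lambda>\<omega>. card (persistent \<omega> m) = c)"
  unfolding persistent_def
proof (intro pred_card_Collect pred_intros_countable(1) pred_intros_countable(2) pred_intros_conj1')
  fix v j w
  show "Measurable.pred (beyond N) (\<lambda>\<omega>. descend \<omega> m j w = v)"
    by (rule pred_count_space_const1[OF measurable_descend_beyond[OF assms]])
qed simp

definition persistent_event :: "nat \<Rightarrow> (nat \<times> nat \<Rightarrow> nat \<Rightarrow> nat) set" where
  "persistent_event j = {\<omega> \<in> space \<mu>. \<exists>n0. \<forall>n\<ge>n0. card (persistent \<omega> n) = j}"

lemma persistent_event_beyond: "persistent_event j \<in> sets (beyond N)"
proof -
  have pred: "Measurable.pred (beyond N) (\<lambda>\<omega>. \<exists>n0. \<forall>n\<ge>max N n0. card (persistent \<omega> n) = j)"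
  proof (intro pred_intros_countable pred_intros_imp')
    fix n0 n :: nat assume "max N n0 \<le> n"
    then show "Measurable.pred (beyond N) (\<lambda>\<omega>. card (persistent \<omega> n) = j)"
      by (intro pred_card_persistent_beyond) simp
  qed
  have shift: "(\<exists>n0. \<forall>n\<ge>max N n0. card (persistent \<omega> n) = j) \<longleftrightarrow>
      (\<exists>n0. \<forall>n\<ge>n0. card (persistent \<omega> n) = j)" for \<omega>
  proof
    assume "\<exists>n0. \<forall>n\<ge>max N n0. card (persistent \<omega> n) = j"
    then obtain n0 where "\<forall>n\<ge>max N n0. card (persistent \<omega> n) = j" by blast
    then show "\<exists>n0. \<forall>n\<ge>n0. card (persistent \<omega> n) = j" by (intro exI[of _ "max N n0"])
  next
    assume "\<exists>n0. \<forall>n\<ge>n0. card (persistent \<omega> n) = j"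
    then obtain n0 where "\<forall>n\<ge>n0. card (persistent \<omega> n) = j" by blast
    then have "\<forall>n\<ge>max N n0. card (persistent \<omega> n) = j" by simp
    then show "\<exists>n0. \<forall>n\<ge>max N n0. card (persistent \<omega> n) = j" by (intro exI[of _ n0])
  qed
  show ?thesis
    using pred unfolding persistent_event_def Measurable.pred_def space_beyond shift .
qed

lemma persistent_event_tail: "persistent_event j \<in> prob_space.tail_events \<mu> level_events"
  using persistent_event_beyond sets_beyond
  unfolding prob_space.tail_events_def[OF prob_space_\<mu>] by auto

lemma indep_coordinates: "prob_space.indep_vars \<mu> factor (\<lambda>i \<omega>. \<omega> i) (vertices vn)"
proof -
  interpret prob_space \<mu> by (rule prob_space_\<mu>)
  have "(1, 0) \<in> vertices vn" using vn_pos[of 1] by (simp add: vertices_def)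
  then have ne: "vertices vn \<noteq> {}" by blast
  have rv: "(\<lambda>\<omega>. \<omega> i) \<in> \<mu> \<rightarrow>\<^sub>M factor i" if "i \<in> vertices vn" for i
    unfolding \<mu>_eq by (rule measurable_component_singleton[OF that])
  have "distr \<mu> (PiM (vertices vn) factor) (\<lambda>\<omega>. restrict \<omega> (vertices vn)) = distr \<mu> \<mu> (\<lambda>\<omega>. \<omega>)"
  proof (rule distr_cong)
    show "sets (PiM (vertices vn) factor) = sets \<mu>" by (simp only: \<mu>_eq)
    fix \<omega> assume "\<omega> \<in> space \<mu>"
    then show "restrict \<omega> (vertices vn) = \<omega>" unfolding space_\<mu> by (rule PiE_restrict)
  qed simp
  also have "\<dots> = \<mu>" by (rule distr_id)
  also have "\<dots> = PiM (vertices vn) (\<lambda>i. distr \<mu> (factor i) (\<lambda>\<omega>. \<omega> i))"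
    unfolding \<mu>_eq
    by (rule PiM_cong[OF refl], rule distr_PiM_component[symmetric, OF prob_space_factor]) assumption
  finally show ?thesis
    by (subst indep_vars_iff_distr_eq_PiM'[OF ne rv]) assumption+
qed

lemma indep_level_events: "prob_space.indep_sets \<mu> level_events UNIV"
proof -
  interpret prob_space \<mu> by (rule prob_space_\<mu>)
  have "indep_vars (\<lambda>k. PiM (level k) factor) (\<lambda>k \<omega>. restrict \<omega> (level k)) UNIV"
  proof (rule indep_vars_restrict[OF indep_coordinates])
    show "level k \<subseteq> vertices vn" for k by (auto simp: level_def vertices_def)
    show "disjoint_family_on level UNIV" by (auto simp: disjoint_family_on_def level_def)
  qed
  then show ?thesis unfolding indep_vars_def level_events_def by blast
qed

lemma persistent_event_sets: "persistent_event j \<in> sets \<mu>"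
proof -
  have "level_events k \<subseteq> sets \<mu>" for k
    using indep_level_events unfolding prob_space.indep_sets_def[OF prob_space_\<mu>] by blast
  then show ?thesis
    using prob_space.tail_events_sets[OF prob_space_\<mu>] persistent_event_tail by blast
qed

lemma persistent_event_0_1: "measure \<mu> (persistent_event j) = 0 \<or> measure \<mu> (persistent_event j) = 1"
  using prob_space.kolmogorov_0_1_law[OF prob_space_\<mu> sigma_algebra_level_events
      indep_level_events persistent_event_tail] .

(* One of the finitely many tail events persistent_event j, j \<in> {1..d}, is almost sure:
   they cover almost everything, so one has positive and hence full probability. *)
lemma persistent_event_AE:
  assumes "infinite {n. vn n = d}"
  shows "\<exists>j\<in>{1..d}. AE \<omega> in \<mu>. \<omega> \<in> persistent_event j"
proof -
  interpret prob_space \<mu> by (rule prob_space_\<mu>)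
  have AE_union: "AE \<omega> in \<mu>. \<omega> \<in> (\<Union>j\<in>{1..d}. persistent_event j)"
    using AE_proper AE_space
  proof eventually_elim
    case (elim \<omega>)
    obtain j where "j \<in> {1..d}" "\<exists>n0. \<forall>n\<ge>n0. card (persistent \<omega> n) = j"
      using persistent_eventually_const[OF elim(1) assms] by blast
    then show ?case using elim(2) unfolding persistent_event_def by blast
  qed
  have "(\<Union>j\<in>{1..d}. persistent_event j) \<in> events"
    using persistent_event_sets by blast
  then have "1 = prob (\<Union>j\<in>{1..d}. persistent_event j)"
    using AE_union by (simp only: AE_in_set_eq_1)
  also have "\<dots> \<le> (\<Sum>j\<in>{1..d}. prob (persistent_event j))"
    by (rule measure_UNION_le) (auto intro: persistent_event_sets)
  finally have "\<exists>j\<in>{1..d}. prob (persistent_event j) \<noteq> 0"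
    using sum.neutral[of "{1..d}" "\<lambda>j. prob (persistent_event j)"] by fastforce
  then obtain j where "j \<in> {1..d}" "prob (persistent_event j) \<noteq> 0" by blast
  moreover from this have "prob (persistent_event j) = 1" using persistent_event_0_1[of j] by simp
  ultimately show ?thesis using AE_in_set_eq_1[OF persistent_event_sets] by blast
qed

lemma card_max_paths_AE:
  assumes "infinite {n. vn n = d}"
  shows "\<exists>j\<in>{1..d}. (AE \<omega> in \<mu>. finite (max_paths \<omega>) \<and> card (max_paths \<omega>) = j) \<and>
     emeasure \<mu> {\<omega> \<in> space \<mu>. finite (max_paths \<omega>) \<and> card (max_paths \<omega>) = j} = 1"
proof -
  interpret prob_space \<mu> by (rule prob_space_\<mu>)
  obtain j where j: "j \<in> {1..d}" and AE_event: "AE \<omega> in \<mu>. \<omega> \<in> persistent_event j"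
    using persistent_event_AE[OF assms] by blast
  let ?E = "{\<omega> \<in> space \<mu>. finite (max_paths \<omega>) \<and> card (max_paths \<omega>) = j}"
  have AE_E: "AE \<omega> in \<mu>. \<omega> \<in> ?E"
    using AE_event AE_proper
  proof eventually_elim
    case (elim \<omega>)
    then show ?case
      using card_max_paths_iff_persistent[OF elim(2)] unfolding persistent_event_def by blast
  qed
  then have "AE \<omega> in \<mu>. finite (max_paths \<omega>) \<and> card (max_paths \<omega>) = j"
    by eventually_elim blast
  moreover have "emeasure \<mu> ?E = 1"
    using AE_E AE_in_set_eq_1[OF sets_card_max_paths] emeasure_eq_measure[of ?E] by simp
  ultimately show ?thesis using j by blast
qed


subsection \<open>Reversing all orders\<close>

definition reverse :: "nat \<Rightarrow> nat \<Rightarrow> (nat \<Rightarrow> nat) \<Rightarrow> nat \<Rightarrow> nat" where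
  "reverse n v f = (\<lambda>e. if e \<in> incoming n v then card (incoming n v) - 1 - f e else 0)"

definition reverse_all :: "(nat \<times> nat \<Rightarrow> nat \<Rightarrow> nat) \<Rightarrow> nat \<times> nat \<Rightarrow> nat \<Rightarrow> nat" where
  "reverse_all \<omega> = restrict (\<lambda>i. reverse (fst i) (snd i) (\<omega> i)) (vertices vn)"

lemma reverse_orders_at:
  assumes "f \<in> orders_at en rng n v"
  shows "reverse n v f \<in> orders_at en rng n v"
proof -
  let ?c = "card (incoming n v)"
  have "bij_betw f (incoming n v) {..<?c}" using assms by (simp add: orders_at_def)
  moreover have "bij_betw (\<lambda>a. ?c - 1 - a) {..<?c} {..<?c}"
    by (rule bij_betw_byWitness[where f'="\<lambda>a. ?c - 1 - a"]) auto
  ultimately have "bij_betw ((\<lambda>a. ?c - 1 - a) \<circ> f) (incoming n v) {..<?c}"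
    by (rule bij_betw_trans)
  then have "bij_betw (reverse n v f) (incoming n v) {..<?c}"
    by (rule bij_betw_cong[THEN iffD1, rotated]) (simp add: reverse_def)
  then show ?thesis by (simp add: orders_at_def reverse_def)
qed

lemma reverse_reverse:
  assumes "f \<in> orders_at en rng n v"
  shows "reverse n v (reverse n v f) = f"
proof
  fix e show "reverse n v (reverse n v f) e = f e"
  proof (cases "e \<in> incoming n v")
    case True then show ?thesis using orders_at_less[OF assms True] by (simp add: reverse_def)
  next
    case False then show ?thesis using assms by (simp add: reverse_def orders_at_def)
  qed
qed

(* Reversal permutes the linear orders of r^{-1}(v), so it preserves the uniform distribution. *)
lemma map_pmf_reverse:
  "map_pmf (reverse n v) (pmf_of_set (orders_at en rng n v)) = pmf_of_set (orders_at en rng n v)"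
proof -
  have inj: "inj_on (reverse n v) (orders_at en rng n v)"
    by (rule inj_onI) (metis reverse_reverse)
  have "reverse n v ` orders_at en rng n v = orders_at en rng n v"
    using reverse_orders_at reverse_reverse by (metis image_eqI image_subsetI subsetI subset_antisym)
  then show ?thesis using map_pmf_of_set_inj[OF inj orders_at_nonempty finite_orders_at] by simp
qed

lemma measurable_reverse_all: "reverse_all \<in> \<mu> \<rightarrow>\<^sub>M \<mu>"
  unfolding reverse_all_def \<mu>_eq
proof (rule measurable_restrict)
  fix i assume i: "i \<in> vertices vn"
  have "(\<lambda>f. reverse (fst i) (snd i) f) \<in> factor i \<rightarrow>\<^sub>M factor i" by (simp add: measurable_def)
  then show "(\<lambda>\<omega>. reverse (fst i) (snd i) (\<omega> i)) \<in> PiM (vertices vn) factor \<rightarrow>\<^sub>M factor i"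
    by (rule measurable_compose[OF measurable_component_singleton[OF i]])
qed

(* Reversing all orders preserves \<mu>: check it on the generating cylinders. *)
lemma distr_reverse_all: "distr \<mu> \<mu> reverse_all = \<mu>"
proof -
  have product: "product_prob_space factor"
    unfolding product_prob_space_def product_prob_space_axioms_def product_sigma_finite_def
    using prob_space_factor prob_space_imp_sigma_finite by blast
  have "distr (PiM (vertices vn) factor) (PiM (vertices vn) factor) reverse_all = PiM (vertices vn) factor"
  proof (rule product_prob_space.PiM_eq[OF product])
    show "sets (distr (PiM (vertices vn) factor) (PiM (vertices vn) factor) reverse_all) =
        sets (PiM (vertices vn) factor)"
      by (rule sets_distr)
    fix J F assume J: "finite J" "J \<subseteq> vertices vn" and F: "\<And>j. j \<in> J \<Longrightarrow> F j \<in> sets (factor j)"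
    let ?emb = "prod_emb (vertices vn) factor J"
    let ?G = "\<lambda>j. reverse (fst j) (snd j) -` F j"
    have "?emb (PiE J F) \<in> sets (PiM (vertices vn) factor)"
      using J by (intro sets_PiM_I) auto
    moreover have "reverse_all -` ?emb (PiE J F) \<inter> space (PiM (vertices vn) factor) = ?emb (PiE J ?G)"
      using J(2) unfolding prod_emb_def space_PiM reverse_all_def by (auto simp: PiE_iff subset_iff; force)
    ultimately have "emeasure (distr (PiM (vertices vn) factor) (PiM (vertices vn) factor) reverse_all)
        (?emb (PiE J F)) = emeasure (PiM (vertices vn) factor) (?emb (PiE J ?G))"
      using emeasure_distr[OF measurable_reverse_all[unfolded \<mu>_eq]] by simp
    also have "\<dots> = (\<Prod>j\<in>J. emeasure (factor j) (?G j))"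
      using J by (intro emeasure_PiM_emb prob_space_factor) auto
    also have "\<dots> = (\<Prod>j\<in>J. emeasure (factor j) (F j))"
    proof (rule prod.cong[OF refl])
      fix j
      have "emeasure (factor j) (?G j) =
          emeasure (map_pmf (reverse (fst j) (snd j)) (pmf_of_set (orders_at en rng (fst j) (snd j)))) (F j)"
        by (simp add: factor_apply)
      also have "\<dots> = emeasure (factor j) (F j)" by (simp only: map_pmf_reverse factor_apply)
      finally show "emeasure (factor j) (?G j) = emeasure (factor j) (F j)" .
    qed
    finally show "emeasure (distr (PiM (vertices vn) factor) (PiM (vertices vn) factor) reverse_all)
        (?emb (PiE J F)) = (\<Prod>j\<in>J. emeasure (factor j) (F j))" .
  qed
  then show ?thesis by (simp only: \<mu>_eq)
qed

lemma max_paths_reverse_all: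
  assumes "proper \<omega>"
  shows "max_paths (reverse_all \<omega>) = Xmin en src rng \<omega>"
proof -
  have "reverse_all \<omega> (n, rng n (x n)) (x n) = card (incoming n (rng n (x n))) - 1 \<longleftrightarrow>
      \<omega> (n, rng n (x n)) (x n) = 0"
    if x: "x \<in> path_space en src rng" and n: "1 \<le> n" for x n
  proof -
    let ?v = "rng n (x n)"
    have "x n < en n" using x n by (simp add: path_space_def)
    then have edge: "x n \<in> incoming n ?v" and "?v < vn n"
      using edge_ends(2)[OF n] by (simp_all add: in_edges_def)
    then have vertex: "(n, ?v) \<in> vertices vn" and order: "\<omega> (n, ?v) \<in> orders_at en rng n ?v"
      using assms n by (simp_all add: vertices_def proper_def)
    have "\<omega> (n, ?v) (x n) < card (incoming n ?v)" using order edge by (rule orders_at_less)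
    then show ?thesis using vertex edge by (auto simp: reverse_all_def reverse_def)
  qed
  then show ?thesis unfolding Xmax_def Xmin_def by auto
qed

end


theorem mainTheorem17:
  fixes vn en :: "nat \<Rightarrow> nat" and src rng :: "nat \<Rightarrow> nat \<Rightarrow> nat" and d :: nat
  assumes "is_bratteli vn en src rng"
    and "aperiodic en src rng"
    and "has_rank vn d"
  shows "\<exists>j\<in>{1..d}.
     (AE \<omega> in ord_measure vn en rng.
        finite (Xmax en src rng \<omega>) \<and> card (Xmax en src rng \<omega>) = j \<and>
        finite (Xmin en src rng \<omega>) \<and> card (Xmin en src rng \<omega>) = j) \<and>
     emeasure (ord_measure vn en rng)
       {\<omega> \<in> space (ord_measure vn en rng).
          finite (Xmax en src rng \<omega>) \<and> card (Xmax en src rng \<omega>) = j} = 1"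
proof -
  interpret bratteli vn en src rng using assms(1) by (rule bratteli.intro)
  have "infinite {n. vn n = d}"
    using assms(3) infinite_level_size_of_rank by blast
  then obtain j where j: "j \<in> {1..d}"
    and AE_max: "AE \<omega> in \<mu>. finite (max_paths \<omega>) \<and> card (max_paths \<omega>) = j"
    and measure_1: "emeasure \<mu> {\<omega> \<in> space \<mu>. finite (max_paths \<omega>) \<and> card (max_paths \<omega>) = j} = 1"
    using card_max_paths_AE by blast
  have "AE \<omega> in distr \<mu> \<mu> reverse_all. finite (max_paths \<omega>) \<and> card (max_paths \<omega>) = j"
    using AE_max by (simp only: distr_reverse_all)
  then have "AE \<omega> in \<mu>. finite (max_paths (reverse_all \<omega>)) \<and> card (max_paths (reverse_all \<omega>)) = j"
    by (rule AE_distrD[OF measurable_reverse_all])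
  then have "AE \<omega> in \<mu>. finite (max_paths \<omega>) \<and> card (max_paths \<omega>) = j \<and>
      finite (Xmin en src rng \<omega>) \<and> card (Xmin en src rng \<omega>) = j"
    using AE_max AE_proper by eventually_elim (simp add: max_paths_reverse_all)
  with j measure_1 show ?thesis by blast
qed

end
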